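(* Let $k\ge1$. Every triangulation of $\mathbb{S}^3$ whose $1$-skeleton has a proper $(R_k(3)-1)$-colouring has a $k$-edge-colouring without monochromatic faces.
   Context: A triangulation of $\mathbb{S}^3$ is a simplicial $2$-complex embedded in $\mathbb{S}^3$ such that every connected component of its complement is a tetrahedron. Its faces are its $2$-cells. $R_k(3)$ is the smallest $n$ such that every $k$-edge-colouring of $K_n$ contains a monochromatic triangle. A $k$-edge-colouring is an arbitrary assignment of one of $k$ colours to each edge; a face is monochromatic if all edges on its boundary have the same colour. *)

theory Defs
  imports "HOL-Analysis.Analysis"
begin

definition ramsey3 :: "nat \<Rightarrow> nat" where
  "ramsey3 k = (LEAST n. \<forall>f :: nat set \<Rightarrow> nat.
      (\<forall>e. e \<subseteq> {..<n} \<and> card e = 2 \<longrightarrow> f e < k) \<longrightarrow>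
      (\<exists>T. T \<subseteq> {..<n} \<and> card T = 3 \<and>
           (\<exists>col. \<forall>e. e \<subseteq> T \<and> card e = 2 \<longrightarrow> f e = col)))"

definition std_simplex :: "'v::finite set \<Rightarrow> (real ^ 'v) set" where
  "std_simplex S = convex hull ((\<lambda>i. axis i (1::real)) ` S)"

definition realization :: "'v::finite set set \<Rightarrow> (real ^ 'v) set" where
  "realization K = \<Union> (std_simplex ` K)"

text \<open>A simplicial 2-complex (vertices V, edges E, faces F) together with a
  topological embedding h of its realization into S^3 (unit sphere of R^4),
  such that every connected component of the complement is a tetrahedron,
  i.e. its boundary is exactly the image of the four triangles of a K4 in the complex.\<close>
definition triangulation_S3 ::
  "'v::finite set \<Rightarrow> 'v set set \<Rightarrow> 'v set set \<Rightarrow> (real ^ 'v \<Rightarrow> real ^ 4) \<Rightarrow> bool" where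
  "triangulation_S3 V E F h \<longleftrightarrow>
     (\<forall>e\<in>E. e \<subseteq> V \<and> card e = 2) \<and>
     (\<forall>f\<in>F. f \<subseteq> V \<and> card f = 3) \<and>
     (\<forall>f\<in>F. \<forall>e. e \<subseteq> f \<and> card e = 2 \<longrightarrow> e \<in> E) \<and>
     (let K = {{v} | v. v \<in> V} \<union> E \<union> F in
        continuous_on (realization K) h \<and>
        inj_on h (realization K) \<and>
        h ` realization K \<subseteq> sphere 0 1 \<and>
        (\<forall>C \<in> components (sphere 0 1 - h ` realization K).
           \<exists>T. T \<subseteq> V \<and> card T = 4 \<and>
               (\<forall>f. f \<subseteq> T \<and> card f = 3 \<longrightarrow> f \<in> F) \<and>
               closure C - C = h ` realization {f. f \<subseteq> T \<and> card f = 3}))"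

end

theory Submission
  imports Defs
begin

text \<open>Only the combinatorics of the triangulation matters. A proper colouring \<open>c\<close> of the
  1-skeleton with \<open>R\<^sub>k(3) - 1\<close> colours maps every face bijectively onto a triangle of the
  complete graph \<open>K\<^bsub>R\<^sub>k(3) - 1\<^esub>\<close>, which by minimality of \<open>R\<^sub>k(3)\<close> has a \<open>k\<close>-edge-colouring
  without monochromatic triangles. Colouring each edge \<open>e\<close> of the complex by the colour
  of its image \<open>c ` e\<close> pulls this back to a colouring without monochromatic faces.\<close>

definition triangle_free_colouring :: "'a set \<Rightarrow> nat \<Rightarrow> ('a set \<Rightarrow> nat) \<Rightarrow> bool" where
  "triangle_free_colouring W k \<phi> \<longleftrightarrow>
     (\<forall>e. e \<subseteq> W \<and> card e = 2 \<longrightarrow> \<phi> e < k) \<and>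
     \<not> (\<exists>T. T \<subseteq> W \<and> card T = 3 \<and> (\<exists>col. \<forall>e. e \<subseteq> T \<and> card e = 2 \<longrightarrow> \<phi> e = col))"

lemma triangle_free_colouring_below_ramsey3:
  assumes "n < ramsey3 k"
  shows "\<exists>\<phi>. triangle_free_colouring {..<n} k \<phi>"
  using not_less_Least[OF assms[unfolded ramsey3_def]]
  unfolding triangle_free_colouring_def by blast

lemma triangle_free_colouring_ramsey3_minus_one:
  "\<exists>\<phi>. triangle_free_colouring {..<ramsey3 k - 1} k \<phi>"
proof (cases "ramsey3 k = 0")
  \<comment> \<open>Junk value of \<open>LEAST\<close>; this case spares us a proof of Ramsey's theorem.\<close>
  case True
  then show ?thesis by (simp add: triangle_free_colouring_def)
next
  case False
  then show ?thesis by (intro triangle_free_colouring_below_ramsey3) simp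
qed

lemma inj_on_if_pairs_are_edges:
  assumes "\<And>u w. u \<in> A \<Longrightarrow> w \<in> A \<Longrightarrow> u \<noteq> w \<Longrightarrow> {u, w} \<in> E"
    and "\<forall>e\<in>E. inj_on c e"
  shows "inj_on c A"
proof (rule inj_onI, rule ccontr)
  fix u w assume "u \<in> A" "w \<in> A" "c u = c w" "u \<noteq> w"
  then have "inj_on c {u, w}" using assms by blast
  from inj_onD[OF this \<open>c u = c w\<close>] \<open>u \<noteq> w\<close> show False by simp
qed

lemma lift_subset_of_inj_image:
  assumes "inj_on c A" and "B \<subseteq> c ` A"
  shows "c ` (A \<inter> c -` B) = B" and "card (A \<inter> c -` B) = card B"
proof -
  show image: "c ` (A \<inter> c -` B) = B" using assms(2) by auto
  have "inj_on c (A \<inter> c -` B)" using assms(1) by (rule inj_on_subset) auto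
  from card_image[OF this] show "card (A \<inter> c -` B) = card B" by (simp only: image)
qed

lemma pullback_colouring_without_monochromatic_face:
  assumes edges: "\<forall>e\<in>E. e \<subseteq> V \<and> card e = 2"
    and faces: "\<forall>f\<in>F. f \<subseteq> V \<and> card f = 3"
    and face_edges: "\<forall>f\<in>F. \<forall>e. e \<subseteq> f \<and> card e = 2 \<longrightarrow> e \<in> E"
    and proper: "\<forall>e\<in>E. inj_on c e"
    and into: "c ` V \<subseteq> W"
    and \<phi>: "triangle_free_colouring W k \<phi>"
  shows "(\<forall>e\<in>E. \<phi> (c ` e) < k) \<and>
         (\<forall>f\<in>F. \<not> (\<exists>col. \<forall>e\<in>E. e \<subseteq> f \<longrightarrow> \<phi> (c ` e) = col))"
proof (intro conjI ballI notI)
  fix e assume e: "e \<in> E"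
  then have "card (c ` e) = 2" using proper edges by (simp add: card_image)
  moreover have "c ` e \<subseteq> W" using e edges into by blast
  ultimately show "\<phi> (c ` e) < k" using \<phi> unfolding triangle_free_colouring_def by blast
next
  fix f assume f: "f \<in> F" and "\<exists>col. \<forall>e\<in>E. e \<subseteq> f \<longrightarrow> \<phi> (c ` e) = col"
  then obtain col where col: "\<forall>e\<in>E. e \<subseteq> f \<longrightarrow> \<phi> (c ` e) = col" by blast
  have inj: "inj_on c f"
  proof (rule inj_on_if_pairs_are_edges[OF _ proper])
    fix u w assume "u \<in> f" "w \<in> f" "u \<noteq> w"
    then show "{u, w} \<in> E" using face_edges f by simp
  qed
  have "\<forall>e'. e' \<subseteq> c ` f \<and> card e' = 2 \<longrightarrow> \<phi> e' = col"
  proof (intro allI impI, elim conjE)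
    fix e' assume e': "e' \<subseteq> c ` f" "card e' = 2"
    let ?e = "f \<inter> c -` e'"
    have "?e \<subseteq> f" by blast
    moreover have "card ?e = 2"
      using lift_subset_of_inj_image(2)[OF inj e'(1)] e'(2) by simp
    ultimately have "?e \<in> E" using face_edges f by blast
    with \<open>?e \<subseteq> f\<close> have "\<phi> (c ` ?e) = col" using col by blast
    then show "\<phi> e' = col" by (simp only: lift_subset_of_inj_image(1)[OF inj e'(1)])
  qed
  moreover have "c ` f \<subseteq> W" using faces f into by blast
  moreover have "card (c ` f) = 3" using faces f inj by (simp add: card_image)
  ultimately show False
    using \<phi> unfolding triangle_free_colouring_def by blast
qed

theorem corollary6p2:
  fixes V :: "'v::finite set" and E F :: "'v set set"
    and h :: "real ^ 'v \<Rightarrow> real ^ 4" and k :: nat and c :: "'v \<Rightarrow> nat"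
  assumes "k \<ge> 1"
    and "triangulation_S3 V E F h"
    and "\<forall>v\<in>V. c v < ramsey3 k - 1"
    and "\<forall>e\<in>E. \<forall>u\<in>e. \<forall>w\<in>e. u \<noteq> w \<longrightarrow> c u \<noteq> c w"
  shows "\<exists>g :: 'v set \<Rightarrow> nat. (\<forall>e\<in>E. g e < k) \<and>
           (\<forall>f\<in>F. \<not> (\<exists>col. \<forall>e\<in>E. e \<subseteq> f \<longrightarrow> g e = col))"
proof -
  have complex: "\<forall>e\<in>E. e \<subseteq> V \<and> card e = 2" "\<forall>f\<in>F. f \<subseteq> V \<and> card f = 3"
    "\<forall>f\<in>F. \<forall>e. e \<subseteq> f \<and> card e = 2 \<longrightarrow> e \<in> E"
    using assms(2) unfolding triangulation_S3_def by auto
  have proper: "\<forall>e\<in>E. inj_on c e"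
    using assms(4) by (auto simp: inj_on_def)
  have into: "c ` V \<subseteq> {..<ramsey3 k - 1}"
    using assms(3) by auto
  obtain \<phi> where "triangle_free_colouring {..<ramsey3 k - 1} k \<phi>"
    using triangle_free_colouring_ramsey3_minus_one by blast
  from pullback_colouring_without_monochromatic_face[OF complex proper into this]
  show ?thesis by (rule exI[where x = "\<lambda>e. \<phi> (c ` e)"])
qed

end
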